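(* Let $n,a,b$ be nonnegative integers with $n\ge a+b+5$ and $b\ge 2$. Then the graph $F_n(a,b)$ is $K_4^-$-saturated.
   Context: All graphs are finite and simple. $K_4^-$ denotes the graph obtained from $K_4$ by deleting one edge. A graph $G$ is $K_4^-$-saturated if $G$ contains no copy of $K_4^-$ but for every pair of nonadjacent vertices $u,v$ of $G$, $G+uv$ contains a copy of $K_4^-$. For nonnegative integers $n,a,b$ with $n\ge a+b+5$, the graph $F_n(a,b)$ is defined as follows. Its vertex set is the disjoint union $I\cup A_1\cup A_2\cup B_1\cup B_2\cup C$, where $I=\{x\}$, $A_1=\{u_1,u_2\}$, $B_1=\{v_1,v_2\}$, $|A_2|=a$, $|B_2|=b$, $|C|=n-a-b-5$ (so it has $n$ vertices). Its edges are: all pairs between $A_1\cup A_2\cup C$ and $B_2$; all pairs between $A_2$ and $B_1$; all pairs between $x$ and $A_1\cup B_1\cup C$; and the two edges $u_1v_1$ and $u_2v_2$. There are no other edges. *)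

theory Defs
  imports Main
begin

definition simple_graph :: "'a set \<Rightarrow> 'a set set \<Rightarrow> bool" where
  "simple_graph V E \<longleftrightarrow> finite V \<and> (\<forall>e\<in>E. e \<subseteq> V \<and> card e = 2)"

definition contains_copy :: "'b set \<Rightarrow> 'b set set \<Rightarrow> 'a set \<Rightarrow> 'a set set \<Rightarrow> bool" where
  "contains_copy VH EH V E \<longleftrightarrow>
     (\<exists>f. inj_on f VH \<and> f ` VH \<subseteq> V \<and> (\<forall>e\<in>EH. f ` e \<in> E))"

definition K4m_V :: "nat set" where
  "K4m_V = {0,1,2,3}"

definition K4m_E :: "nat set set" where
  "K4m_E = {{0,1},{0,2},{0,3},{1,2},{1,3}}"

definition K4m_saturated :: "'a set \<Rightarrow> 'a set set \<Rightarrow> bool" where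
  "K4m_saturated V E \<longleftrightarrow>
     \<not> contains_copy K4m_V K4m_E V E \<and>
     (\<forall>u\<in>V. \<forall>v\<in>V. u \<noteq> v \<and> {u,v} \<notin> E \<longrightarrow> contains_copy K4m_V K4m_E V (insert {u,v} E))"

text \<open>Vertices of F_n(a,b): x; u_1,u_2 (A1); v_1,v_2 (B1); A2 (indices < a);
  B2 (indices < b); C (indices < n-a-b-5).\<close>

datatype fvert = Xv | Uv nat | Vv nat | A2v nat | B2v nat | Cv nat

definition F_A1 :: "fvert set" where "F_A1 = {Uv 1, Uv 2}"
definition F_B1 :: "fvert set" where "F_B1 = {Vv 1, Vv 2}"
definition F_A2 :: "nat \<Rightarrow> fvert set" where "F_A2 a = A2v ` {..<a}"
definition F_B2 :: "nat \<Rightarrow> fvert set" where "F_B2 b = B2v ` {..<b}"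
definition F_C :: "nat \<Rightarrow> nat \<Rightarrow> nat \<Rightarrow> fvert set" where
  "F_C n a b = Cv ` {..<n - a - b - 5}"

definition F_V :: "nat \<Rightarrow> nat \<Rightarrow> nat \<Rightarrow> fvert set" where
  "F_V n a b = {Xv} \<union> F_A1 \<union> F_A2 a \<union> F_B1 \<union> F_B2 b \<union> F_C n a b"

definition F_E :: "nat \<Rightarrow> nat \<Rightarrow> nat \<Rightarrow> fvert set set" where
  "F_E n a b =
     {{p, q} | p q. p \<in> F_A1 \<union> F_A2 a \<union> F_C n a b \<and> q \<in> F_B2 b}
   \<union> {{p, q} | p q. p \<in> F_A2 a \<and> q \<in> F_B1}
   \<union> {{Xv, q} | q. q \<in> F_A1 \<union> F_B1 \<union> F_C n a b}
   \<union> {{Uv 1, Vv 1}, {Uv 2, Vv 2}}"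

end

theory Submission
  imports Defs
begin

text \<open>A copy of \<open>K\<^sub>4\<^sup>-\<close> is a pair of triangles sharing an edge. In \<open>F\<^sub>n(a,b)\<close> the vertex \<open>x\<close>
  lies on every triangle, because \<open>F\<^sub>n(a,b) - x\<close> is bipartite with sides \<open>A\<^sub>1 \<union> A\<^sub>2 \<union> C\<close> and
  \<open>B\<^sub>1 \<union> B\<^sub>2\<close>; hence the only triangles are \<open>x u\<^sub>1 v\<^sub>1\<close> and \<open>x u\<^sub>2 v\<^sub>2\<close>, which share no edge.
  Adding a missing edge \<open>uv\<close> creates a \<open>K\<^sub>4\<^sup>-\<close> whenever \<open>u\<close> and \<open>v\<close> have two common
  neighbours, or \<open>u\<close> lies on a triangle and \<open>v\<close> is adjacent to another vertex of it. The first
  case covers all missing edges inside \<open>A\<^sub>1 \<union> A\<^sub>2 \<union> C\<close> (common neighbours: two vertices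
  of \<open>B\<^sub>2\<close>, which is where \<open>b \<ge> 2\<close> is needed), inside \<open>B\<^sub>2\<close>, and from \<open>x\<close> to \<open>A\<^sub>2 \<union> B\<^sub>2\<close>;
  the second covers all missing edges at \<open>v\<^sub>1\<close> and \<open>v\<^sub>2\<close>.\<close>

lemma contains_K4m_iff:
  "contains_copy K4m_V K4m_E V E \<longleftrightarrow>
   (\<exists>p0 p1 p2 p3. p0 \<in> V \<and> p1 \<in> V \<and> p2 \<in> V \<and> p3 \<in> V \<and> distinct [p0, p1, p2, p3] \<and>
     {p0, p1} \<in> E \<and> {p0, p2} \<in> E \<and> {p0, p3} \<in> E \<and> {p1, p2} \<in> E \<and> {p1, p3} \<in> E)"
  (is "_ \<longleftrightarrow> (\<exists>p0 p1 p2 p3. ?K4m p0 p1 p2 p3)")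
proof
  assume "contains_copy K4m_V K4m_E V E"
  then obtain f where f: "inj_on f {0, 1, 2, 3}" "f ` {0, 1, 2, 3} \<subseteq> V" "\<forall>e\<in>K4m_E. f ` e \<in> E"
    unfolding contains_copy_def K4m_V_def by blast
  have "distinct [f 0, f 1, f 2, f 3]"
    using f(1) by (auto simp: inj_on_def)
  with f have "?K4m (f 0) (f 1) (f 2) (f 3)"
    by (auto simp: K4m_E_def)
  then show "\<exists>p0 p1 p2 p3. ?K4m p0 p1 p2 p3" by blast
next
  assume "\<exists>p0 p1 p2 p3. ?K4m p0 p1 p2 p3"
  then obtain p0 p1 p2 p3 where p: "?K4m p0 p1 p2 p3" by blast
  define f where "f i = (if i = 0 then p0 else if i = 1 then p1 else if i = 2 then p2 else p3)"
    for i :: nat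
  have "inj_on f {0, 1, 2, 3}" "f ` {0, 1, 2, 3} \<subseteq> V" "\<forall>e\<in>K4m_E. f ` e \<in> E"
    using p by (auto simp: inj_on_def f_def K4m_E_def insert_commute)
  then show "contains_copy K4m_V K4m_E V E"
    unfolding contains_copy_def K4m_V_def by blast
qed

definition creates_K4m :: "'a set \<Rightarrow> 'a set set \<Rightarrow> 'a \<Rightarrow> 'a \<Rightarrow> bool" where
  "creates_K4m V E u v \<longleftrightarrow> contains_copy K4m_V K4m_E V (insert {u, v} E)"

lemma creates_K4m_sym: "creates_K4m V E u v \<Longrightarrow> creates_K4m V E v u"
  by (simp add: creates_K4m_def insert_commute)

lemma creates_K4m_if_common_neighbours:
  assumes "{u, v, w, z} \<subseteq> V" "distinct [u, v, w, z]"
    and "{u, w} \<in> E" "{u, z} \<in> E" "{v, w} \<in> E" "{v, z} \<in> E"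
  shows "creates_K4m V E u v"
  unfolding creates_K4m_def contains_K4m_iff
  by (rule exI[of _ u], rule exI[of _ v], rule exI[of _ w], rule exI[of _ z]) (use assms in auto)

lemma creates_K4m_if_triangle_neighbour:
  assumes "{u, v, y, z} \<subseteq> V" "distinct [u, v, y, z]"
    and "{u, y} \<in> E" "{u, z} \<in> E" "{y, z} \<in> E" "{y, v} \<in> E"
  shows "creates_K4m V E u v"
  unfolding creates_K4m_def contains_K4m_iff
  by (rule exI[of _ u], rule exI[of _ y], rule exI[of _ v], rule exI[of _ z]) (use assms in auto)

definition F_arc :: "nat \<Rightarrow> nat \<Rightarrow> nat \<Rightarrow> fvert \<Rightarrow> fvert \<Rightarrow> bool" where
  "F_arc n a b p q \<longleftrightarrow>
     (p \<in> F_A1 \<union> F_A2 a \<union> F_C n a b \<and> q \<in> F_B2 b) \<or> (p \<in> F_A2 a \<and> q \<in> F_B1) \<or>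
     (p = Xv \<and> q \<in> F_A1 \<union> F_B1 \<union> F_C n a b) \<or> (p, q) \<in> {(Uv 1, Vv 1), (Uv 2, Vv 2)}"

lemma doubleton_in_F_E_iff: "{p, q} \<in> F_E n a b \<longleftrightarrow> F_arc n a b p q \<or> F_arc n a b q p"
  unfolding F_E_def F_arc_def by (auto simp: doubleton_eq_iff)

lemmas F_parts_defs = F_A1_def F_B1_def F_A2_def F_B2_def F_C_def

lemmas F_adjacency_simps = doubleton_in_F_E_iff F_arc_def F_parts_defs

lemma mem_F_V_iff:
  "p \<in> F_V n a b \<longleftrightarrow>
     (case p of Xv \<Rightarrow> True | Uv i \<Rightarrow> i \<in> {1, 2} | Vv i \<Rightarrow> i \<in> {1, 2}
      | A2v i \<Rightarrow> i < a | B2v i \<Rightarrow> i < b | Cv i \<Rightarrow> i < n - a - b - 5)"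
  by (cases p) (auto simp: F_V_def F_parts_defs)

lemma F_triangle:
  assumes "{p, q} \<in> F_E n a b" "{q, r} \<in> F_E n a b" "{p, r} \<in> F_E n a b"
  shows "\<exists>i. {p, q, r} = {Xv, Uv i, Vv i}"
  using assms by (auto simp: F_adjacency_simps)

lemma F_K4m_free: "\<not> contains_copy K4m_V K4m_E (F_V n a b) (F_E n a b)"
proof
  assume "contains_copy K4m_V K4m_E (F_V n a b) (F_E n a b)"
  then obtain p0 p1 p2 p3 where p: "distinct [p0, p1, p2, p3]"
    "{p0, p1} \<in> F_E n a b" "{p0, p2} \<in> F_E n a b" "{p0, p3} \<in> F_E n a b"
    "{p1, p2} \<in> F_E n a b" "{p1, p3} \<in> F_E n a b"
    unfolding contains_K4m_iff by blast
  obtain i where i: "{p0, p1, p2} = {Xv, Uv i, Vv i}"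
    using F_triangle[OF p(2) p(5) p(3)] by blast
  obtain j where j: "{p0, p1, p3} = {Xv, Uv j, Vv j}"
    using F_triangle[OF p(2) p(6) p(4)] by blast
  have "p0 \<in> {Xv, Uv i, Vv i}" "p1 \<in> {Xv, Uv i, Vv i}" "p2 \<in> {Xv, Uv i, Vv i}"
    "p0 \<in> {Xv, Uv j, Vv j}" "p1 \<in> {Xv, Uv j, Vv j}" "p3 \<in> {Xv, Uv j, Vv j}"
    using i j by blast+
  with p(1) show False by auto
qed

lemma F_creates_K4m_A_side:
  assumes "b \<ge> 2" "u \<in> F_A1 \<union> F_A2 a \<union> F_C n a b" "v \<in> F_A1 \<union> F_A2 a \<union> F_C n a b" "u \<noteq> v"
  shows "creates_K4m (F_V n a b) (F_E n a b) u v"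
  using assms
  by (intro creates_K4m_if_common_neighbours[where w = "B2v 0" and z = "B2v 1"])
     (auto simp: F_adjacency_simps F_V_def)

lemma F_creates_K4m_B2_B2:
  assumes "u \<in> F_B2 b" "v \<in> F_B2 b" "u \<noteq> v"
  shows "creates_K4m (F_V n a b) (F_E n a b) u v"
  using assms
  by (intro creates_K4m_if_common_neighbours[where w = "Uv 1" and z = "Uv 2"])
     (auto simp: F_adjacency_simps F_V_def)

lemma F_creates_K4m_at_x:
  assumes "v \<in> F_V n a b" "v \<noteq> Xv" "{Xv, v} \<notin> F_E n a b"
  shows "creates_K4m (F_V n a b) (F_E n a b) Xv v"
proof -
  consider "v \<in> F_A2 a" | "v \<in> F_B2 b"
    using assms by (cases v) (auto simp: F_adjacency_simps mem_F_V_iff)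
  then show ?thesis
  proof cases
    case 1
    then show ?thesis
      by (intro creates_K4m_if_common_neighbours[where w = "Vv 1" and z = "Vv 2"])
         (auto simp: F_adjacency_simps F_V_def)
  next
    case 2
    then show ?thesis
      by (intro creates_K4m_if_common_neighbours[where w = "Uv 1" and z = "Uv 2"])
         (auto simp: F_adjacency_simps F_V_def)
  qed
qed

lemma F_creates_K4m_at_B1:
  assumes "i \<in> {1, 2}" "v \<in> F_V n a b" "v \<notin> {Xv, Vv i}" "{Vv i, v} \<notin> F_E n a b"
  shows "creates_K4m (F_V n a b) (F_E n a b) (Vv i) v"
proof -
  have triangle: "{Xv, Uv i, Vv i} \<subseteq> F_V n a b"
    "{Vv i, Xv} \<in> F_E n a b" "{Vv i, Uv i} \<in> F_E n a b"
    "{Xv, Uv i} \<in> F_E n a b" "{Uv i, Xv} \<in> F_E n a b"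
    using assms(1) by (auto simp: F_adjacency_simps mem_F_V_iff)
  have distinct: "distinct [Vv i, v, Xv, Uv i]" "distinct [Vv i, v, Uv i, Xv]"
    using triangle(3) assms(3,4) by auto
  consider "{Xv, v} \<in> F_E n a b" | "{Uv i, v} \<in> F_E n a b"
    using assms by (cases v) (auto simp: F_adjacency_simps mem_F_V_iff)
  then show ?thesis
  proof cases
    case 1
    with triangle distinct(1) assms(2) show ?thesis
      by (intro creates_K4m_if_triangle_neighbour[where y = Xv and z = "Uv i"]) auto
  next
    case 2
    with triangle distinct(2) assms(2) show ?thesis
      by (intro creates_K4m_if_triangle_neighbour[where y = "Uv i" and z = Xv]) auto
  qed
qed

lemma F_non_edge_cases:
  assumes "u \<in> F_V n a b" "v \<in> F_V n a b" "u \<noteq> v" "{u, v} \<notin> F_E n a b"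
  obtains "u \<in> F_A1 \<union> F_A2 a \<union> F_C n a b" "v \<in> F_A1 \<union> F_A2 a \<union> F_C n a b"
    | "u = Xv" | "v = Xv" | "u \<in> F_B2 b" "v \<in> F_B2 b"
    | i where "i \<in> {1, 2}" "u = Vv i" "v \<noteq> Xv"
    | i where "i \<in> {1, 2}" "v = Vv i" "u \<noteq> Xv"
  using assms by (cases u; cases v) (auto simp: F_adjacency_simps mem_F_V_iff)

lemma F_creates_K4m_if_non_edge:
  assumes "b \<ge> 2" "u \<in> F_V n a b" "v \<in> F_V n a b" "u \<noteq> v" "{u, v} \<notin> F_E n a b"
  shows "creates_K4m (F_V n a b) (F_E n a b) u v"
  using assms(2-5)
proof (cases rule: F_non_edge_cases)
  case 1
  with assms(1,4) show ?thesis by (simp add: F_creates_K4m_A_side)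
next
  case 2
  with assms(3-5) show ?thesis by (simp add: F_creates_K4m_at_x)
next
  case 3
  with assms(2,4,5) show ?thesis by (simp add: F_creates_K4m_at_x creates_K4m_sym insert_commute)
next
  case 4
  with assms(4) show ?thesis by (simp add: F_creates_K4m_B2_B2)
next
  case (5 i)
  with assms(3-5) show ?thesis by (simp add: F_creates_K4m_at_B1)
next
  case (6 i)
  with assms(2,4,5) show ?thesis by (simp add: F_creates_K4m_at_B1 creates_K4m_sym insert_commute)
qed

theorem lemma2p2:
  fixes n a b :: nat
  assumes "n \<ge> a + b + 5" and "b \<ge> 2"
  shows "K4m_saturated (F_V n a b) (F_E n a b)"
  using F_K4m_free F_creates_K4m_if_non_edge[OF assms(2)]
  by (auto simp: K4m_saturated_def creates_K4m_def)

end
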